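(* For every $a\in[\mathbb{F}_q^{\times}]$ (Teichmüller lifts) one has $f_a^{\mathrm{LT}}=1$. More generally, for every $a\in\mathcal{O}_K^{\times}$, \[ \big(f_a^{\mathrm{LT}}\big)^{-1}\in 1+c_aT_K^{q-1}-c_a^{p^{f-1}}T_K^{(q-1)(p^{f-1}+1)}+T_K^{(q-1)(2p^{f-1}+1)}\mathbb{F}_q[[T_K^{q-1}]], \] where $c_a\in\mathbb{F}_q$ is the reduction modulo $p$ of $(1-a^{q-1})/p\in\mathcal{O}_K$.
   Context: Let $p$ be an odd prime, $K$ the unramified extension of $\mathbb{Q}_p$ of degree $f\ge1$, with ring of integers $\mathcal{O}_K$ and residue field $\mathbb{F}_q$, $q=p^f$. Let $G_{\mathrm{LT}}$ be the Lubin–Tate formal $\mathcal{O}_K$-module over $\mathcal{O}_K$ attached to the uniformizer $p$, with formal variable $T_K$ chosen so that its logarithm is $\sum_{n\ge0}p^{-n}T_K^{q^n}$. For $a\in\mathcal{O}_K$ let $a_{\mathrm{LT}}(T_K)\in aT_K+T_K^2\mathcal{O}_K[[T_K]]$ be the endomorphism series of $G_{\mathrm{LT}}$ attached to $a$, and also denote by $a_{\mathrm{LT}}(T_K)\in\mathbb{F}_q[[T_K]]$ its reduction mod $p$. For $a\in\mathcal{O}_K^\times$ with reduction $\bar a\in\mathbb{F}_q^\times$, set $f_a^{\mathrm{LT}}:=\bar aT_K/a_{\mathrm{LT}}(T_K)\in 1+T_K\mathbb{F}_q[[T_K]]$. *)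

theory Defs
  imports "HOL-Computational_Algebra.Formal_Power_Series"
begin

definition dvd_in :: "'k::field set \<Rightarrow> 'k \<Rightarrow> 'k \<Rightarrow> bool" where
  "dvd_in OK d x \<longleftrightarrow> (\<exists>y\<in>OK. x = d * y)"

text \<open>The field 'k (= K) with subset OK (= O_K) and reduction map red : OK -> 'r (= F_q)
  form the unramified extension of Q_p of degree f:
  'k has characteristic 0, OK is a valuation ring of 'k (so 'k = Frac OK) whose maximal ideal
  is p OK, OK is p-adically separated and complete (so OK is a complete DVR with uniformizer p),
  and red is a surjective ring homomorphism OK -> 'r with kernel p OK onto a field with p^f
  elements. Such data is unique up to isomorphism (K = unramified extension of degree f).\<close>
definition unramified_setup ::
  "nat \<Rightarrow> nat \<Rightarrow> 'k::field_char_0 set \<Rightarrow> ('k \<Rightarrow> 'r::{field,finite}) \<Rightarrow> bool" where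
  "unramified_setup p f OK red \<longleftrightarrow>
     0 \<in> OK \<and> 1 \<in> OK \<and>
     (\<forall>x\<in>OK. \<forall>y\<in>OK. x + y \<in> OK \<and> x * y \<in> OK \<and> - x \<in> OK) \<and>
     (\<forall>x. x \<noteq> 0 \<longrightarrow> x \<in> OK \<or> inverse x \<in> OK) \<and>
     inverse (of_nat p) \<notin> OK \<and>
     (\<forall>x\<in>OK. \<not> dvd_in OK (of_nat p) x \<longrightarrow> inverse x \<in> OK) \<and>
     (\<forall>x\<in>OK. x \<noteq> 0 \<longrightarrow> (\<exists>n. \<not> dvd_in OK (of_nat p ^ n) x)) \<and>
     (\<forall>s. (\<forall>n. s n \<in> OK) \<and> (\<forall>n. dvd_in OK (of_nat p ^ n) (s (Suc n) - s n)) \<longrightarrow>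
          (\<exists>x\<in>OK. \<forall>n. dvd_in OK (of_nat p ^ n) (x - s n))) \<and>
     red 1 = 1 \<and>
     (\<forall>x\<in>OK. \<forall>y\<in>OK. red (x + y) = red x + red y \<and> red (x * y) = red x * red y) \<and>
     red ` OK = UNIV \<and>
     (\<forall>x\<in>OK. red x = 0 \<longleftrightarrow> dvd_in OK (of_nat p) x) \<and>
     card (UNIV :: 'r set) = p ^ f"

text \<open>Logarithm of the Lubin-Tate formal group: sum over n of p^(-n) T^(q^n), q = p^f.\<close>
definition LT_log :: "nat \<Rightarrow> nat \<Rightarrow> 'k::field_char_0 fps" where
  "LT_log p f = Abs_fps (\<lambda>k. if k \<in> range (\<lambda>m. (p ^ f) ^ m)
        then inverse (of_nat p ^ (LEAST m. (p ^ f) ^ m = k)) else 0)"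

definition LT_endo :: "nat \<Rightarrow> nat \<Rightarrow> 'k::field_char_0 \<Rightarrow> 'k fps" where
  "LT_endo p f a = fps_inv (LT_log p f) oo (fps_const a * LT_log p f)"

definition red_fps :: "('k \<Rightarrow> 'r) \<Rightarrow> 'k fps \<Rightarrow> 'r fps" where
  "red_fps red g = Abs_fps (\<lambda>n. red (fps_nth g n))"

definition f_LT :: "nat \<Rightarrow> nat \<Rightarrow> ('k::field_char_0 \<Rightarrow> 'r::field) \<Rightarrow> 'k \<Rightarrow> 'r fps" where
  "f_LT p f red a = fps_const (red a) * fps_X / red_fps red (LT_endo p f a)"

end

(*
  Write a_LT = a T + T^q S. As the logarithm is T + T^q/p modulo T^(q^2), the functional
  equation log(a_LT) = a log(T) says, in degrees below (q-1)q,

    S = (a - a^q)/p - sum_{0<j<q} (binom(q,j)/p) a^(q-j) T^((q-1)j) S^j,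

  the sum coming from the binomial expansion of (a T + T^q S)^q. By induction on the degree
  this recursion makes those coefficients of S integral, so it can be reduced mod p, where
  (a - a^q)/p becomes abar c with c = c_a. Writing s = p^(f-1), binom(q,j)/p is divisible
  by p for 0 < j < 2s except j = s, where it is congruent to 1; hence modulo T^(2(q-1)s)
  the reduced S is abar c - abar^(q-s) (abar c)^s T^((q-1)s) = abar (c - c^s T^((q-1)s)),
  and abar T / (abar T + T^q S) is the inverse of the claimed series. The coefficients of S
  live in degrees divisible by q-1 because log is supported in degrees congruent to 1 mod q-1.
  Only coefficients below degree (q-1)q are shown to be integral; the others only enter h.
  For a Teichmueller lift, a^q = a, so a T itself solves the functional equation.
*)
theory Submission
  imports Defs "HOL-Number_Theory.Cong"
begin

unbundle fps_syntax

section \<open>Finite fields and binomial coefficients of prime powers\<close>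

lemma field_power_card_eq_same:
  fixes x :: "'a::{field,finite}"
  shows "x ^ card (UNIV :: 'a set) = x"
proof (cases "x = 0")
  case True
  then show ?thesis using finite_UNIV_card_ge_0[where 'a='a] by simp
next
  case False
  let ?U = "UNIV - {0::'a}"
  have "(\<Prod>y\<in>?U. x * y) = \<Prod>?U"
    by (rule prod.reindex_bij_witness[of _ "\<lambda>y. y / x" "\<lambda>y. x * y"]) (use False in auto)
  then have "x ^ card ?U * \<Prod>?U = 1 * \<Prod>?U" by (simp add: prod.distrib)
  moreover have "\<Prod>?U \<noteq> 0" by simp
  ultimately have "x ^ card ?U = 1" by (rule mult_right_cancel[THEN iffD1, rotated])
  moreover have "Suc (card ?U) = card (UNIV :: 'a set)" by (rule card_Suc_Diff1) simp_all
  ultimately show ?thesis by (metis power_Suc2 mult_1_left)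
qed

lemma prime_power_dvd_choose_prime_power:
  fixes p e j :: nat
  assumes "prime p" "0 < j" "j \<le> p ^ e"
  shows "p ^ (e - multiplicity p j) dvd (p ^ e choose j)"
proof -
  have nonunit: "\<not> is_unit p" using assms(1) by auto
  have choose_pos: "p ^ e choose j \<noteq> 0" using assms(3) by simp
  have "j * (p ^ e choose j) = p ^ e * (p ^ e - 1 choose (j - 1))"
    using times_binomial_minus1_eq assms(2) by blast
  then have "p ^ e dvd j * (p ^ e choose j)" by simp
  then have "e \<le> multiplicity p j + multiplicity p (p ^ e choose j)"
    using assms choose_pos nonunit
    by (simp add: power_dvd_iff_le_multiplicity prime_elem_multiplicity_mult_distrib)
  then show ?thesis
    using choose_pos nonunit by (simp add: power_dvd_iff_le_multiplicity)
qed

lemma prime_dvd_choose_prime_power: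
  fixes p e j :: nat
  assumes "prime p" "0 < j" "j < p ^ e"
  shows "p dvd (p ^ e choose j)"
proof -
  have "\<not> p ^ e dvd j" using assms(2,3) by (auto dest: dvd_imp_le)
  then have "multiplicity p j < e"
    using assms(1,2) power_dvd_iff_le_multiplicity[of j p e] by (simp add: not_le prime_nat_iff)
  then have "p dvd p ^ (e - multiplicity p j)" by simp
  also have "\<dots> dvd (p ^ e choose j)"
    using prime_power_dvd_choose_prime_power[OF assms(1,2)] assms(3) by simp
  finally show ?thesis .
qed

lemma of_nat_choose_pred_prime_power:
  fixes p e k :: nat
  assumes "prime p" "of_nat p = (0 :: 'a::comm_ring_1)" "k < p ^ e"
  shows "of_nat (p ^ e - 1 choose k) = ((-1) ^ k :: 'a)"
  using assms(3)
proof (induction k)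
  case (Suc k)
  have "p dvd (p ^ e choose Suc k)"
    using prime_dvd_choose_prime_power[OF assms(1), of "Suc k"] Suc.prems by blast
  then have "(of_nat (p ^ e choose Suc k) :: 'a) = 0"
    using assms(2) by (metis dvdE mult_zero_left of_nat_mult)
  moreover have "p ^ e choose Suc k = (p ^ e - 1 choose k) + (p ^ e - 1 choose Suc k)"
  proof -
    have "Suc (p ^ e - 1) = p ^ e" using Suc.prems by linarith
    then show ?thesis using binomial_Suc_Suc[of "p ^ e - 1" k] by simp
  qed
  ultimately show ?case using Suc by (simp add: eq_neg_iff_add_eq_0 add.commute)
qed simp

section \<open>Truncations and supports of power series\<close>

definition fps_supp_cong :: "nat \<Rightarrow> nat \<Rightarrow> 'a::zero fps \<Rightarrow> bool" where
  "fps_supp_cong d r F \<longleftrightarrow> (\<forall>n. F $ n \<noteq> 0 \<longrightarrow> [n = r] (mod d))"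

lemma fps_supp_cong_mult:
  fixes F G :: "'a::comm_semiring_0 fps"
  assumes "fps_supp_cong d r F" "fps_supp_cong d r' G"
  shows "fps_supp_cong d (r + r') (F * G)"
  unfolding fps_supp_cong_def
proof (intro allI impI)
  fix n assume "(F * G) $ n \<noteq> 0"
  then obtain i where "i \<in> {0..n}" "F $ i * G $ (n - i) \<noteq> 0"
    unfolding fps_mult_nth by (blast dest: sum.not_neutral_contains_not_neutral)
  then have i: "i \<le> n" "F $ i \<noteq> 0" "G $ (n - i) \<noteq> 0" by auto
  then have "[i + (n - i) = r + r'] (mod d)"
    using assms by (intro cong_add) (auto simp: fps_supp_cong_def)
  then show "[n = r + r'] (mod d)" using i(1) by simp
qed

lemma fps_supp_cong_power:
  fixes F :: "'a::comm_semiring_1 fps"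
  assumes "fps_supp_cong d r F"
  shows "fps_supp_cong d (k * r) (F ^ k)"
proof (induction k)
  case 0
  then show ?case by (simp add: fps_supp_cong_def)
next
  case (Suc k)
  then show ?case using fps_supp_cong_mult[OF assms Suc.IH] by (simp add: add.commute)
qed

lemma fps_cutoff_power_nth:
  fixes F :: "'a::comm_semiring_1 fps"
  assumes "k < n"
  shows "(fps_cutoff n F ^ j) $ k = (F ^ j) $ k"
  using assms
proof (induction j arbitrary: k)
  case (Suc j)
  have "(fps_cutoff n F ^ Suc j) $ k = (F * fps_cutoff n F ^ j) $ k"
    using Suc.prems by (simp add: fps_cutoff_left_mult_nth)
  also have "\<dots> = (F ^ Suc j) $ k"
    using Suc by (simp add: fps_mult_nth)
  finally show ?case .
qed simp

lemma fps_power_nth_eq_cutoff_power_nth: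
  fixes G :: "'a::comm_semiring_1 fps"
  assumes "G $ 0 = 0" "2 \<le> i"
  shows "(G ^ i) $ n = (fps_cutoff n G ^ i) $ n"
proof -
  obtain j where j: "i = Suc j" "0 < j" using assms(2) by (cases i) auto
  have "G $ k * (G ^ j) $ (n - k) = fps_cutoff n G $ k * (fps_cutoff n G ^ j) $ (n - k)"
    if k: "k \<le> n" for k
  proof -
    consider "k = 0" | "k = n" | "0 < k" "k < n" using k by fastforce
    then show ?thesis
    proof cases
      case 3
      then show ?thesis by (simp add: fps_cutoff_power_nth)
    qed (use assms j in \<open>simp_all add: fps_power_zeroth zero_power\<close>)
  qed
  then have "(G * G ^ j) $ n = (fps_cutoff n G * fps_cutoff n G ^ j) $ n"
    unfolding fps_mult_nth by (intro sum.cong) auto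
  then show ?thesis using j(1) by simp
qed

lemma fps_cutoff_compose_nth:
  assumes "n < N"
  shows "(fps_cutoff N F oo G) $ n = (F oo G) $ n"
  unfolding fps_compose_nth using assms by (intro sum.cong) auto

lemma fps_supp_cong_of_compose:
  fixes L G :: "'a::comm_ring_1 fps"
  assumes L: "fps_supp_cong d 1 L" "L $ 0 = 0" "L $ 1 = 1" and G0: "G $ 0 = 0"
    and LG: "fps_supp_cong d 1 (L oo G)"
  shows "fps_supp_cong d 1 G"
  unfolding fps_supp_cong_def
proof (intro allI)
  fix n
  show "G $ n \<noteq> 0 \<longrightarrow> [n = 1] (mod d)"
  proof (induction n rule: less_induct)
    case (less n)
    show ?case
    proof (intro impI, rule ccontr)
      assume Gn: "G $ n \<noteq> 0" and not1: "\<not> [n = 1] (mod d)"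
      have "n \<noteq> 0" using Gn G0 by metis
      have cutoff_supp: "fps_supp_cong d 1 (fps_cutoff n G)"
        using less.IH by (simp add: fps_supp_cong_def)
      have "L $ i * (G ^ i) $ n = (if i = 1 then G $ n else 0)" if "i \<le> n" for i
      proof (cases "i = 1 \<or> L $ i = 0")
        case False
        then have i1: "[i = 1] (mod d)" using L(1) by (simp add: fps_supp_cong_def)
        have "i \<noteq> 0" using False L(2) by metis
        then have "2 \<le> i" using False by auto
        then have "(G ^ i) $ n = (fps_cutoff n G ^ i) $ n"
          by (rule fps_power_nth_eq_cutoff_power_nth[OF G0])
        also have "\<dots> = 0"
        proof (rule ccontr)
          assume "(fps_cutoff n G ^ i) $ n \<noteq> 0"
          then have "[n = i] (mod d)"
            using fps_supp_cong_power[OF cutoff_supp, of i] by (simp add: fps_supp_cong_def)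
          then have "[n = 1] (mod d)" using i1 by (rule cong_trans)
          then show False using not1 by contradiction
        qed
        finally show ?thesis using False by simp
      qed (use L(3) in \<open>auto simp del: One_nat_def\<close>)
      then have "(L oo G) $ n = G $ n"
        using \<open>n \<noteq> 0\<close> by (simp add: fps_compose_nth)
      then show False using LG Gn not1 by (simp add: fps_supp_cong_def)
    qed
  qed
qed

lemma fps_cutoff_eq_of_recursion:
  fixes T :: "'a::comm_ring_1 fps"
  assumes "0 < d"
    and rec: "\<And>m. m < 2 * d \<Longrightarrow>
      T $ m = (if m = 0 then w else 0) - (fps_const c * fps_X ^ d * T ^ k) $ m"
  shows "fps_cutoff (2 * d) T = fps_const w - fps_const (c * w ^ k) * fps_X ^ d"
proof -
  have rec': "T $ m = (if m = 0 then w else 0) - c * (if m < d then 0 else (T ^ k) $ (m - d))"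
    if "m < 2 * d" for m
    using rec[OF that] by (simp add: mult.assoc fps_X_power_mult_nth)
  have low: "fps_cutoff d T = fps_cutoff d (fps_const w)"
    using rec' \<open>0 < d\<close> by (auto simp: fps_cutoff_eq_fps_cutoff_iff)
  have "(T ^ k) $ j = (if j = 0 then w ^ k else 0)" if "j < d" for j
  proof -
    have "(T ^ k) $ j = (fps_cutoff d T ^ k) $ j" using that by (simp add: fps_cutoff_power_nth)
    also have "\<dots> = (fps_const w ^ k) $ j" unfolding low using that by (simp add: fps_cutoff_power_nth)
    finally show ?thesis by simp
  qed
  then show ?thesis
    using rec' \<open>0 < d\<close> by (auto simp: fps_eq_iff fps_X_power_mult_nth mult.assoc)
qed

lemma fps_divide_mult_self:
  fixes Y U :: "'a::field fps"
  assumes "Y \<noteq> 0" "U $ 0 \<noteq> 0"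
  shows "Y / (Y * U) = inverse U"
proof -
  have "Y = Y * U * inverse U" using assms(2) by (simp add: mult.assoc inverse_mult_eq_1')
  also have "\<dots> / (Y * U) = inverse U"
    using assms by (subst nonzero_mult_div_cancel_left) auto
  finally show ?thesis .
qed

section \<open>The Lubin--Tate logarithm and its endomorphisms\<close>

locale lubin_tate =
  fixes p f :: nat
  assumes prime_p: "prime p" and f_ge_1: "f \<ge> 1"
begin

abbreviation q :: nat where "q \<equiv> p ^ f"
abbreviation s :: nat where "s \<equiv> p ^ (f - 1)"

lemma p_gt_1: "1 < p"
  using prime_p prime_gt_1_nat by blast

lemma q_gt_1: "1 < q"
  using p_gt_1 f_ge_1 by (intro one_less_power) auto

lemma q_eq_p_mult_s: "q = p * s"
  using f_ge_1 by (metis Suc_diff_le diff_Suc_1 power_Suc)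

lemma q_Suc: "q = Suc (q - 1)"
  using q_gt_1 by simp

lemma cong_q_1: "[q = 1] (mod (q - 1))"
  using q_gt_1 by (simp add: cong_altdef_nat)

lemma LT_log_nth_q_power: "(LT_log p f :: 'k::field_char_0 fps) $ (q ^ m) = inverse (of_nat p ^ m)"
proof -
  have "(LEAST m'. q ^ m' = q ^ m) = m"
    using q_gt_1 by (intro Least_equality) auto
  then show ?thesis by (auto simp: LT_log_def)
qed

lemma LT_log_nth_eq_0: "n \<notin> range (\<lambda>m. q ^ m) \<Longrightarrow> (LT_log p f :: 'k::field_char_0 fps) $ n = 0"
  by (simp add: LT_log_def)

lemma LT_log_nth_0 [simp]: "(LT_log p f :: 'k::field_char_0 fps) $ 0 = 0"
  using p_gt_1 by (intro LT_log_nth_eq_0) auto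

lemma LT_log_nth_1 [simp]: "(LT_log p f :: 'k::field_char_0 fps) $ Suc 0 = 1"
  using LT_log_nth_q_power[of 0] by simp

lemma LT_log_supp: "fps_supp_cong (q - 1) 1 (LT_log p f :: 'k::field_char_0 fps)"
  unfolding fps_supp_cong_def
proof (intro allI impI)
  fix n assume "(LT_log p f :: 'k fps) $ n \<noteq> 0"
  then obtain m where "n = q ^ m" using LT_log_nth_eq_0 by blast
  then show "[n = 1] (mod (q - 1))" using cong_pow[OF cong_q_1, of m] by simp
qed

lemma fps_cutoff_LT_log:
  "fps_cutoff (q\<^sup>2) (LT_log p f :: 'k::field_char_0 fps) =
     fps_X + fps_const (inverse (of_nat p)) * fps_X ^ q"
proof (rule fps_ext)
  fix n
  have "1 < q" "q < q\<^sup>2" using q_gt_1 p_gt_1 by (auto simp: power2_eq_square)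
  have small: "q ^ m < q\<^sup>2 \<longleftrightarrow> m < 2" for m
    using q_gt_1 by (rule power_strict_increasing_iff)
  show "fps_cutoff (q\<^sup>2) (LT_log p f) $ n =
      (fps_X + fps_const (inverse (of_nat p)) * fps_X ^ q :: 'k fps) $ n"
  proof (cases "n \<in> range (\<lambda>m. q ^ m) \<and> n < q\<^sup>2")
    case True
    then obtain m where "n = q ^ m" "m < 2" using small by auto
    then have "m = 0 \<or> m = 1" by auto
    then show ?thesis
      using \<open>n = q ^ m\<close> \<open>1 < q\<close> \<open>q < q\<^sup>2\<close> LT_log_nth_q_power[of m]
      by auto
  next
    case False
    moreover have "1 \<in> range (\<lambda>m. q ^ m)" "q \<in> range (\<lambda>m. q ^ m)"
      by (metis power_0 rangeI, metis power_one_right rangeI)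
    ultimately have "n \<noteq> 1" "n \<noteq> q" using \<open>1 < q\<close> \<open>q < q\<^sup>2\<close> by auto
    then show ?thesis
      using False by (auto simp: LT_log_nth_eq_0)
  qed
qed

lemma LT_log_compose_LT_endo:
  "LT_log p f oo LT_endo p f a = fps_const a * (LT_log p f :: 'k::field_char_0 fps)"
proof -
  let ?L = "LT_log p f :: 'k fps"
  have "?L oo LT_endo p f a = (?L oo fps_inv ?L) oo (fps_const a * ?L)"
    unfolding LT_endo_def by (rule fps_compose_assoc) (simp_all add: fps_inv_def)
  also have "?L oo fps_inv ?L = fps_X" by (rule fps_inv_right) simp_all
  finally show ?thesis by simp
qed

lemma LT_endo_nth_0 [simp]: "(LT_endo p f a :: 'k::field_char_0 fps) $ 0 = 0"
  by (simp add: LT_endo_def fps_inv_def)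

lemma LT_endo_nth_1 [simp]: "(LT_endo p f a :: 'k::field_char_0 fps) $ Suc 0 = a"
  using arg_cong[OF LT_log_compose_LT_endo, of "\<lambda>F. F $ 1" a] by (simp add: fps_compose_nth)

lemma LT_endo_supp: "fps_supp_cong (q - 1) 1 (LT_endo p f a :: 'k::field_char_0 fps)"
proof (rule fps_supp_cong_of_compose[OF LT_log_supp])
  show "fps_supp_cong (q - 1) 1 (LT_log p f oo LT_endo p f a :: 'k fps)"
    using LT_log_supp by (auto simp: LT_log_compose_LT_endo fps_supp_cong_def)
qed simp_all

abbreviation LT_tail :: "'k::field_char_0 \<Rightarrow> 'k fps" where
  "LT_tail a \<equiv> fps_shift q (LT_endo p f a)"

abbreviation tail_const :: "'k::field_char_0 \<Rightarrow> 'k" where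
  "tail_const a \<equiv> (a - a ^ q) / of_nat p"

lemma LT_endo_eq:
  fixes a :: "'k::field_char_0"
  shows "LT_endo p f a = fps_const a * fps_X + fps_X ^ q * LT_tail a"
proof -
  let ?G = "LT_endo p f a :: 'k fps"
  have zero: "?G $ n = 0" if "n < q" "n \<noteq> 1" for n
  proof (rule ccontr)
    assume nz: "?G $ n \<noteq> 0"
    then have "n \<noteq> 0" by (metis LT_endo_nth_0)
    have "[n = 1] (mod (q - 1))" using nz LT_endo_supp[of a] unfolding fps_supp_cong_def by blast
    then show False
      using that \<open>n \<noteq> 0\<close> by (cases "n = q - 1") (auto simp: cong_def)
  qed
  have "fps_cutoff q ?G = fps_const a * fps_X"
  proof (rule fps_ext)
    fix n
    show "fps_cutoff q ?G $ n = (fps_const a * fps_X) $ n"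
      using zero[of n] q_gt_1 by (cases "n = 1") auto
  qed
  then show ?thesis using fps_shift_cutoff'[of q ?G] by (simp add: add.commute)
qed

lemma LT_tail_supp: "fps_supp_cong (q - 1) 0 (LT_tail a)"
  unfolding fps_supp_cong_def
proof (intro allI impI)
  fix n assume "LT_tail a $ n \<noteq> 0"
  then have "[n + q = 1] (mod (q - 1))"
    using LT_endo_supp[of a] unfolding fps_supp_cong_def by simp
  then have "[n + q = 0 + q] (mod (q - 1))"
    using cong_trans[OF _ cong_sym[OF cong_q_1]] by simp
  then show "[n = 0] (mod (q - 1))" by (simp only: cong_add_rcancel_nat)
qed

lemma LT_endo_truncated:
  assumes "n < q\<^sup>2"
  shows "(LT_endo p f a + fps_const (inverse (of_nat p)) * LT_endo p f a ^ q) $ n =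
    (fps_const a * (fps_X + fps_const (inverse (of_nat p)) * fps_X ^ q) :: 'k::field_char_0 fps) $ n"
proof -
  let ?G = "LT_endo p f a :: 'k fps" and ?c = "fps_const (inverse (of_nat p)) :: 'k fps"
  have "(fps_X + ?c * fps_X ^ q) oo ?G = ?G + ?c * ?G ^ q"
    by (simp add: fps_compose_add_distrib fps_compose_mult_distrib fps_X_power_compose)
  then have "(?G + ?c * ?G ^ q) $ n = (LT_log p f oo ?G) $ n"
    using fps_cutoff_compose_nth[OF assms] by (metis fps_cutoff_LT_log)
  also have "\<dots> = (fps_const a * fps_cutoff (q\<^sup>2) (LT_log p f)) $ n"
    using assms by (simp add: LT_log_compose_LT_endo)
  finally show ?thesis by (simp add: fps_cutoff_LT_log)
qed

lemma LT_endo_teichmueller: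
  assumes "a ^ q = a"
  shows "LT_endo p f a = fps_const a * (fps_X :: 'k::field_char_0 fps)"
proof -
  let ?L = "LT_log p f :: 'k fps"
  have a_power: "a ^ (q ^ m) = a" for m
    by (induction m) (simp_all add: power_mult mult.commute assms)
  have "?L oo (fps_const a * fps_X) = fps_const a * ?L"
  proof (rule fps_ext)
    fix n
    show "(?L oo (fps_const a * fps_X)) $ n = (fps_const a * ?L) $ n"
      using a_power LT_log_nth_eq_0[of n] by (cases "n \<in> range (\<lambda>m. q ^ m)") auto
  qed
  then have "LT_endo p f a = fps_inv ?L oo (?L oo (fps_const a * fps_X))"
    by (simp add: LT_endo_def)
  also have "\<dots> = (fps_inv ?L oo ?L) oo (fps_const a * fps_X)"
    by (rule fps_compose_assoc) simp_all
  also have "fps_inv ?L oo ?L = fps_X" by (rule fps_inv) simp_all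
  finally show ?thesis by simp
qed

definition cross_terms :: "'a::comm_ring_1 \<Rightarrow> 'a fps \<Rightarrow> 'a fps" where
  "cross_terms a S = (\<Sum>j\<in>{1..q - 1}. fps_const (of_nat ((q choose j) div p) * a ^ (q - j)) *
      (fps_X ^ ((q - 1) * j) * S ^ j))"

lemma power_q_linear_plus_tail:
  fixes a :: "'a::comm_ring_1"
  shows "(fps_const a * fps_X + fps_X ^ q * S) ^ q =
    fps_X ^ q * (fps_const (a ^ q) + of_nat p * cross_terms a S + fps_X ^ ((q - 1) * q) * S ^ q)"
proof -
  define t where
    "t j = fps_const (of_nat (q choose j) * a ^ (q - j)) * (fps_X ^ ((q - 1) * j) * S ^ j)" for j
  have binomial_term: "of_nat (q choose j) * (fps_X ^ q * S) ^ j * (fps_const a * fps_X) ^ (q - j) =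
      fps_X ^ q * t j" if "j \<le> q" for j
  proof -
    have exponent: "q * j + (q - j) = q + (q - 1) * j"
      using that q_gt_1 by (simp add: diff_mult_distrib)
    have "of_nat (q choose j) * (fps_X ^ q * S) ^ j * (fps_const a * fps_X) ^ (q - j) =
        fps_const (of_nat (q choose j)) * fps_const (a ^ (q - j)) * (fps_X ^ (q * j + (q - j)) * S ^ j)"
      by (simp add: power_mult_distrib power_mult[symmetric] power_add mult_ac fps_of_nat
          del: fps_const_mult)
    also have "\<dots> = fps_X ^ q * t j"
      unfolding exponent t_def fps_const_mult[symmetric] by (simp add: power_add mult_ac del: fps_const_mult)
    finally show ?thesis .
  qed
  have split: "{..q} = insert 0 (insert q {1..q - 1})" using q_gt_1 by auto
  have middle: "(\<Sum>j\<in>{1..q - 1}. t j) = of_nat p * cross_terms a S"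
  proof -
    have "t j = of_nat p * (fps_const (of_nat ((q choose j) div p) * a ^ (q - j)) *
        (fps_X ^ ((q - 1) * j) * S ^ j))" if "j \<in> {1..q - 1}" for j
    proof -
      have "p dvd (q choose j)"
        using prime_dvd_choose_prime_power[OF prime_p, of j f] that q_gt_1 by auto
      then obtain c where c: "q choose j = p * c" by (elim dvdE)
      then show ?thesis unfolding t_def c using p_gt_1 by (simp add: mult.assoc[symmetric] flip: fps_of_nat)
    qed
    then show ?thesis
      unfolding cross_terms_def sum_distrib_left by (rule sum.cong[OF refl])
  qed
  have "(fps_const a * fps_X + fps_X ^ q * S) ^ q = (\<Sum>j\<le>q. fps_X ^ q * t j)"
    unfolding add.commute[of "fps_const a * fps_X"] binomial_ring by (simp add: binomial_term)
  also have "\<dots> = fps_X ^ q * (\<Sum>j\<le>q. t j)" by (rule sum_distrib_left[symmetric])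
  also have "(\<Sum>j\<le>q. t j) = t 0 + (t q + (\<Sum>j\<in>{1..q - 1}. t j))"
    using q_gt_1 p_gt_1 unfolding split by (subst sum.insert; auto)+
  also have "t 0 = fps_const (a ^ q)" by (simp add: t_def)
  also have "t q = fps_X ^ ((q - 1) * q) * S ^ q" by (simp add: t_def)
  finally show ?thesis by (simp only: middle add_ac)
qed

lemma LT_tail_rec:
  fixes a :: "'k::field_char_0"
  assumes "m < (q - 1) * q"
  shows "LT_tail a $ m = (if m = 0 then tail_const a else 0) - cross_terms a (LT_tail a) $ m"
proof -
  let ?G = "LT_endo p f a :: 'k fps"
  have p0: "(of_nat p :: 'k) \<noteq> 0" using p_gt_1 by simp
  have "q + m < q\<^sup>2" using assms q_gt_1 by (simp add: power2_eq_square algebra_simps)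
  from LT_endo_truncated[OF this, of a]
  have "?G $ (q + m) + inverse (of_nat p) * (?G ^ q) $ (q + m) = (if m = 0 then a * inverse (of_nat p) else 0)"
    using q_gt_1 by simp
  moreover have "?G $ (q + m) = LT_tail a $ m" by (simp add: add.commute)
  moreover have "(?G ^ q) $ (q + m) = (if m = 0 then a ^ q else 0) + of_nat p * cross_terms a (LT_tail a) $ m"
    using assms by (subst LT_endo_eq) (simp add: power_q_linear_plus_tail fps_X_power_mult_nth)
  moreover have "inverse (of_nat p) * (x + of_nat p * y) = inverse (of_nat p) * x + y" for x y :: 'k
    using p0 by (simp add: distrib_left)
  ultimately show ?thesis
    using p0 by (cases "m = 0") (auto simp: field_simps eq_neg_iff_add_eq_0)
qed

end

section \<open>Reduction modulo p\<close>

locale integral_reduction =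
  fixes p :: nat and OK :: "'k::field set" and red :: "'k \<Rightarrow> 'r::field"
  assumes OK_zero: "0 \<in> OK" and OK_one: "1 \<in> OK"
    and OK_add: "x \<in> OK \<Longrightarrow> y \<in> OK \<Longrightarrow> x + y \<in> OK"
    and OK_mult: "x \<in> OK \<Longrightarrow> y \<in> OK \<Longrightarrow> x * y \<in> OK"
    and OK_uminus: "x \<in> OK \<Longrightarrow> - x \<in> OK"
    and red_one: "red 1 = 1"
    and red_add: "x \<in> OK \<Longrightarrow> y \<in> OK \<Longrightarrow> red (x + y) = red x + red y"
    and red_mult: "x \<in> OK \<Longrightarrow> y \<in> OK \<Longrightarrow> red (x * y) = red x * red y"
    and red_eq_0_iff: "x \<in> OK \<Longrightarrow> red x = 0 \<longleftrightarrow> dvd_in OK (of_nat p) x"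
begin

lemma OK_diff: "x \<in> OK \<Longrightarrow> y \<in> OK \<Longrightarrow> x - y \<in> OK"
  using OK_add[OF _ OK_uminus] by (simp only: diff_conv_add_uminus)

lemma OK_power: "x \<in> OK \<Longrightarrow> x ^ n \<in> OK"
  by (induction n) (simp_all add: OK_one OK_mult)

lemma OK_of_nat: "of_nat n \<in> OK"
  by (induction n) (simp_all add: OK_zero OK_one OK_add)

lemma OK_sum: "(\<And>i. i \<in> A \<Longrightarrow> g i \<in> OK) \<Longrightarrow> sum g A \<in> OK"
  by (induction A rule: infinite_finite_induct) (simp_all add: OK_zero OK_add)

lemma red_zero: "red 0 = 0"
proof -
  have "red 0 + red 0 = red 0" using red_add[OF OK_zero OK_zero] by simp
  then show ?thesis by (simp only: add_cancel_left_right)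
qed

lemma red_uminus:
  assumes "x \<in> OK"
  shows "red (- x) = - red x"
proof -
  have "red x + red (- x) = 0" using red_add[OF assms OK_uminus[OF assms]] red_zero by simp
  then show ?thesis by (rule minus_unique[symmetric])
qed

lemma red_diff: "x \<in> OK \<Longrightarrow> y \<in> OK \<Longrightarrow> red (x - y) = red x - red y"
  using red_add[OF _ OK_uminus] red_uminus by (simp only: diff_conv_add_uminus)

lemma red_power: "x \<in> OK \<Longrightarrow> red (x ^ n) = red x ^ n"
  by (induction n) (simp_all add: red_one red_mult OK_power)

lemma red_of_nat: "red (of_nat n) = of_nat n"
  by (induction n) (simp_all add: red_zero red_one red_add OK_of_nat OK_one)

lemma red_sum: "(\<And>i. i \<in> A \<Longrightarrow> g i \<in> OK) \<Longrightarrow> red (sum g A) = (\<Sum>i\<in>A. red (g i))"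
  by (induction A rule: infinite_finite_induct) (simp_all add: red_zero red_add OK_sum)

lemma residue_of_nat_p_eq_0: "(of_nat p :: 'r) = 0"
proof -
  have "dvd_in OK (of_nat p) (of_nat p)" unfolding dvd_in_def using OK_one by force
  then show ?thesis using red_eq_0_iff[OF OK_of_nat] by (simp add: red_of_nat)
qed

definition lifts_below :: "nat \<Rightarrow> 'k fps \<Rightarrow> 'r fps \<Rightarrow> bool" where
  "lifts_below N F Fb \<longleftrightarrow> (\<forall>k<N. F $ k \<in> OK \<and> red (F $ k) = Fb $ k)"

lemma lifts_below_mono: "lifts_below N F Fb \<Longrightarrow> M \<le> N \<Longrightarrow> lifts_below M F Fb"
  by (simp add: lifts_below_def)

lemma lifts_below_const: "c \<in> OK \<Longrightarrow> lifts_below N (fps_const c) (fps_const (red c))"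
  by (simp add: lifts_below_def OK_zero red_zero)

lemma lifts_below_zero: "lifts_below N 0 0"
  by (simp add: lifts_below_def OK_zero red_zero)

lemma lifts_below_one: "lifts_below N 1 1"
  by (simp add: lifts_below_def OK_zero red_zero OK_one red_one)

lemma lifts_below_add:
  "lifts_below N F Fb \<Longrightarrow> lifts_below N G Gb \<Longrightarrow> lifts_below N (F + G) (Fb + Gb)"
  by (simp add: lifts_below_def OK_add red_add)

lemma lifts_below_sum:
  "(\<And>i. i \<in> A \<Longrightarrow> lifts_below N (F i) (Fb i)) \<Longrightarrow>
    lifts_below N (\<Sum>i\<in>A. F i) (\<Sum>i\<in>A. Fb i)"
  by (induction A rule: infinite_finite_induct)
    (simp_all add: lifts_below_add lifts_below_zero)

lemma lifts_below_mult:
  assumes F: "lifts_below N F Fb" and G: "lifts_below N G Gb"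
  shows "lifts_below N (F * G) (Fb * Gb)"
  unfolding lifts_below_def
proof (intro allI impI)
  fix k assume "k < N"
  then have mem: "F $ i * G $ (k - i) \<in> OK" and
    red_term: "red (F $ i * G $ (k - i)) = Fb $ i * Gb $ (k - i)" if "i \<in> {0..k}" for i
    using F G that by (auto simp: lifts_below_def OK_mult red_mult)
  have "red ((F * G) $ k) = (\<Sum>i=0..k. red (F $ i * G $ (k - i)))"
    unfolding fps_mult_nth by (rule red_sum[OF mem])
  also have "\<dots> = (Fb * Gb) $ k"
    unfolding fps_mult_nth by (rule sum.cong[OF refl red_term])
  moreover have "(F * G) $ k \<in> OK"
    unfolding fps_mult_nth by (rule OK_sum[OF mem])
  ultimately show "(F * G) $ k \<in> OK \<and> red ((F * G) $ k) = (Fb * Gb) $ k" by simp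
qed

lemma lifts_below_power: "lifts_below N F Fb \<Longrightarrow> lifts_below N (F ^ n) (Fb ^ n)"
  by (induction n) (simp_all add: lifts_below_mult lifts_below_one)

lemma lifts_below_X_power_mult:
  assumes "lifts_below N F Fb"
  shows "lifts_below (N + k) (fps_X ^ k * F) (fps_X ^ k * Fb)"
  unfolding lifts_below_def
proof (intro allI impI)
  fix i assume "i < N + k"
  then show "(fps_X ^ k * F) $ i \<in> OK \<and> red ((fps_X ^ k * F) $ i) = (fps_X ^ k * Fb) $ i"
    using assms by (cases "i < k") (simp_all add: fps_X_power_mult_nth OK_zero red_zero lifts_below_def)
qed

lemma red_fps_linear_plus_X_power_mult:
  assumes "1 < k"
  shows "red_fps red (fps_const a * fps_X + fps_X ^ k * S) =
    fps_const (red a) * fps_X + fps_X ^ k * red_fps red S"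
proof (rule fps_ext)
  fix n
  show "red_fps red (fps_const a * fps_X + fps_X ^ k * S) $ n =
      (fps_const (red a) * fps_X + fps_X ^ k * red_fps red S) $ n"
    using assms by (cases "n = 1") (simp_all add: red_fps_def fps_X_power_mult_nth red_zero)
qed

end

locale unramified_lubin_tate = lubin_tate p f + integral_reduction p OK red
  for p f :: nat and OK :: "'k::field_char_0 set" and red :: "'k \<Rightarrow> 'r::{field,finite}" +
  assumes odd_p: "odd p" and card_residue_field: "card (UNIV :: 'r set) = p ^ f"
begin

lemma residue_power_q: "(x :: 'r) ^ q = x"
  using field_power_card_eq_same[of x] by (simp add: card_residue_field)

lemma three_s_le_q: "3 * s \<le> q"
proof -
  have "3 \<le> p" using p_gt_1 odd_p by (cases "p = 2") auto
  then show ?thesis using q_eq_p_mult_s by simp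
qed

lemma of_nat_binomial_div_p_eq_0:
  assumes "0 < j" "j < 2 * s" "j \<noteq> s"
  shows "(of_nat ((q choose j) div p) :: 'r) = 0"
proof -
  have "\<not> s dvd j"
  proof
    assume "s dvd j"
    then obtain k where "j = s * k" by (elim dvdE)
    then show False using assms by (cases k) (auto simp: numeral_2_eq_2 less_Suc_eq)
  qed
  then have "multiplicity p j < f - 1"
    using assms(1) prime_p power_dvd_iff_le_multiplicity[of j p "f - 1"]
    by (simp add: not_le prime_nat_iff)
  then have "p ^ 2 dvd p ^ (f - multiplicity p j)"
    by (intro le_imp_power_dvd) linarith
  also have "\<dots> dvd (q choose j)"
    using prime_power_dvd_choose_prime_power[OF prime_p assms(1)] assms(2) three_s_le_q by simp
  finally obtain c where "q choose j = p * (p * c)" by (metis dvdE power2_eq_square mult.assoc)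
  then show ?thesis using p_gt_1 residue_of_nat_p_eq_0 by simp
qed

lemma of_nat_binomial_s_div_p: "(of_nat ((q choose s) div p) :: 'r) = 1"
proof -
  have "s * (q choose s) = s * (p * (q - 1 choose (s - 1)))"
    using times_binomial_minus1_eq[of s q] q_eq_p_mult_s p_gt_1 by (simp add: mult_ac)
  then have "(q choose s) div p = q - 1 choose (s - 1)" using p_gt_1 by simp
  moreover have "s - 1 < q" using three_s_le_q q_gt_1 by linarith
  moreover have "even (s - 1)" using odd_p p_gt_1 by simp
  ultimately show ?thesis
    using of_nat_choose_pred_prime_power[OF prime_p residue_of_nat_p_eq_0] by simp
qed

lemma cross_terms_residue:
  fixes b :: 'r and T :: "'r fps"
  assumes "m < 2 * ((q - 1) * s)"
  shows "cross_terms b T $ m = (fps_const (b ^ (q - s)) * fps_X ^ ((q - 1) * s) * T ^ s) $ m"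
proof -
  have "1 \<le> s" using p_gt_1 by simp
  then have s_mem: "s \<in> {1..q - 1}" using three_s_le_q by auto
  have "(fps_const (of_nat ((q choose j) div p) * b ^ (q - j)) * (fps_X ^ ((q - 1) * j) * T ^ j)) $ m =
      (if j = s then (fps_const (b ^ (q - s)) * fps_X ^ ((q - 1) * s) * T ^ s) $ m else 0)"
    if j: "j \<in> {1..q - 1}" for j
  proof (cases "j < 2 * s")
    case True
    then show ?thesis
      using of_nat_binomial_div_p_eq_0[of j] of_nat_binomial_s_div_p j by (auto simp: mult.assoc)
  next
    case False
    then have "(q - 1) * (2 * s) \<le> (q - 1) * j" by (intro mult_le_mono2) simp
    moreover have "2 * ((q - 1) * s) = (q - 1) * (2 * s)" by (simp only: mult_ac)
    ultimately have "m < (q - 1) * j" using assms by linarith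
    moreover have "j \<noteq> s" using False \<open>1 \<le> s\<close> by auto
    ultimately show ?thesis by (simp add: fps_X_power_mult_nth)
  qed
  then have "cross_terms b T $ m =
      (\<Sum>j\<in>{1..q - 1}. if j = s then (fps_const (b ^ (q - s)) * fps_X ^ ((q - 1) * s) * T ^ s) $ m else 0)"
    unfolding cross_terms_def fps_sum_nth by (rule sum.cong[OF refl])
  then show ?thesis using s_mem by simp
qed

lemma cross_terms_lifts_below:
  assumes "a \<in> OK" "lifts_below m S Sb"
  shows "lifts_below (Suc m) (cross_terms a S) (cross_terms (red a) Sb)"
  unfolding cross_terms_def
proof (rule lifts_below_sum)
  fix j assume j: "j \<in> {1..q - 1}"
  let ?c = "of_nat ((q choose j) div p) * a ^ (q - j)"
  have "lifts_below (m + (q - 1) * j) (fps_X ^ ((q - 1) * j) * S ^ j) (fps_X ^ ((q - 1) * j) * Sb ^ j)"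
    by (intro lifts_below_X_power_mult lifts_below_power assms(2))
  then have "lifts_below (Suc m) (fps_X ^ ((q - 1) * j) * S ^ j) (fps_X ^ ((q - 1) * j) * Sb ^ j)"
    by (rule lifts_below_mono) (use j q_gt_1 in auto)
  moreover have "lifts_below (Suc m) (fps_const ?c) (fps_const (red ?c))"
    using assms(1) by (intro lifts_below_const OK_mult OK_of_nat OK_power)
  moreover have "red ?c = of_nat ((q choose j) div p) * red a ^ (q - j)"
    using assms(1) by (simp add: red_mult OK_of_nat OK_power red_of_nat red_power)
  ultimately show "lifts_below (Suc m)
      (fps_const ?c * (fps_X ^ ((q - 1) * j) * S ^ j))
      (fps_const (of_nat ((q choose j) div p) * red a ^ (q - j)) * (fps_X ^ ((q - 1) * j) * Sb ^ j))"
    using lifts_below_mult by fastforce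
qed

context
  fixes a :: 'k
  assumes a_mem: "a \<in> OK" and tail_const_mem: "tail_const a \<in> OK"
begin

lemma LT_tail_lifts_below: "m \<le> (q - 1) * q \<Longrightarrow> lifts_below m (LT_tail a) (red_fps red (LT_tail a))"
proof (induction m)
  case 0
  then show ?case by (simp add: lifts_below_def)
next
  case (Suc m)
  then have IH: "lifts_below m (LT_tail a) (red_fps red (LT_tail a))" by simp
  have "cross_terms a (LT_tail a) $ m \<in> OK"
    using cross_terms_lifts_below[OF a_mem IH] by (simp add: lifts_below_def)
  moreover have "(if m = 0 then tail_const a else 0) \<in> OK"
    using tail_const_mem OK_zero by simp
  moreover have "LT_tail a $ m =
      (if m = 0 then tail_const a else 0) - cross_terms a (LT_tail a) $ m"
    using Suc.prems by (intro LT_tail_rec) simp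
  ultimately have "LT_tail a $ m \<in> OK" by (simp only: OK_diff)
  then show ?case
    using IH unfolding lifts_below_def red_fps_def by (simp add: less_Suc_eq)
qed

lemma residue_LT_tail_rec:
  assumes "m < (q - 1) * q"
  shows "red_fps red (LT_tail a) $ m = (if m = 0 then red (tail_const a) else 0) -
    cross_terms (red a) (red_fps red (LT_tail a)) $ m"
proof -
  have "lifts_below (Suc m) (cross_terms a (LT_tail a)) (cross_terms (red a) (red_fps red (LT_tail a)))"
    using assms by (intro cross_terms_lifts_below a_mem LT_tail_lifts_below) simp
  then have "cross_terms a (LT_tail a) $ m \<in> OK"
    "red (cross_terms a (LT_tail a) $ m) = cross_terms (red a) (red_fps red (LT_tail a)) $ m"
    by (simp_all add: lifts_below_def)
  then show ?thesis
    using LT_tail_rec[OF assms, of a] tail_const_mem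
    by (simp add: red_fps_def red_diff OK_zero red_zero)
qed

lemma fps_cutoff_residue_LT_tail:
  "fps_cutoff (2 * ((q - 1) * s)) (red_fps red (LT_tail a)) =
    fps_const (red (tail_const a)) -
    fps_const (red a ^ (q - s) * red (tail_const a) ^ s) * fps_X ^ ((q - 1) * s)"
proof (rule fps_cutoff_eq_of_recursion)
  show "0 < (q - 1) * s" using q_gt_1 p_gt_1 by simp
next
  fix m assume m: "m < 2 * ((q - 1) * s)"
  moreover have "(q - 1) * (2 * s) \<le> (q - 1) * q"
    using three_s_le_q by (intro mult_le_mono2) linarith
  moreover have "2 * ((q - 1) * s) = (q - 1) * (2 * s)" by (simp only: mult_ac)
  ultimately have "m < (q - 1) * q" by linarith
  then show "red_fps red (LT_tail a) $ m = (if m = 0 then red (tail_const a) else 0) -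
      (fps_const (red a ^ (q - s)) * fps_X ^ ((q - 1) * s) * red_fps red (LT_tail a) ^ s) $ m"
    using residue_LT_tail_rec cross_terms_residue[OF m] by simp
qed

lemma residue_LT_tail_expansion:
  obtains R where "fps_supp_cong (q - 1) 0 R"
    "red_fps red (LT_tail a) = fps_const (red (tail_const a)) -
      fps_const (red a ^ (q - s) * red (tail_const a) ^ s) * fps_X ^ ((q - 1) * s) +
      fps_X ^ (2 * ((q - 1) * s)) * R"
proof
  let ?T = "red_fps red (LT_tail a)" and ?d = "2 * ((q - 1) * s)"
  show "fps_supp_cong (q - 1) 0 (fps_shift ?d ?T)"
    unfolding fps_supp_cong_def
  proof (intro allI impI)
    fix k assume "fps_shift ?d ?T $ k \<noteq> 0"
    then have "LT_tail a $ (k + ?d) \<noteq> 0" by (auto simp: red_fps_def red_zero)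
    then have "[k + ?d = 0] (mod (q - 1))"
      using LT_tail_supp[of a] unfolding fps_supp_cong_def by blast
    moreover have "[0 = ?d] (mod (q - 1))" by (simp add: cong_sym cong_0_iff)
    ultimately have "[k + ?d = ?d] (mod (q - 1))" by (rule cong_trans)
    then have "[k + ?d = 0 + ?d] (mod (q - 1))" by simp
    then show "[k = 0] (mod (q - 1))" by (simp only: cong_add_rcancel_nat)
  qed
  show "?T = fps_const (red (tail_const a)) -
      fps_const (red a ^ (q - s) * red (tail_const a) ^ s) * fps_X ^ ((q - 1) * s) +
      fps_X ^ ?d * fps_shift ?d ?T"
    using fps_shift_cutoff'[of ?d ?T] unfolding fps_cutoff_residue_LT_tail by (simp add: ac_simps)
qed

end

lemma fermat_quotient_mem:
  assumes "a \<in> OK" "red a \<noteq> 0"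
  shows "(1 - a ^ (q - 1)) / of_nat p \<in> OK"
proof -
  have "red a * red a ^ (q - 1) = red a * 1"
    using residue_power_q[of "red a"] q_Suc by (metis power_Suc mult_1_right)
  then have "red a ^ (q - 1) = 1" using assms(2) by simp
  then have "red (1 - a ^ (q - 1)) = 0"
    using assms(1) by (simp add: red_diff OK_one OK_power red_one red_power)
  then obtain y where "y \<in> OK" "1 - a ^ (q - 1) = of_nat p * y"
    using red_eq_0_iff[of "1 - a ^ (q - 1)"] assms(1) OK_diff OK_one OK_power
    unfolding dvd_in_def by blast
  then show ?thesis using p_gt_1 by simp
qed

lemma f_LT_teichmueller:
  assumes "a \<in> OK" "a ^ (q - 1) = 1"
  shows "f_LT p f red a = 1"
proof -
  have "a ^ q = a * a ^ (q - 1)" using q_Suc by (metis power_Suc)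
  then have "LT_endo p f a = fps_const a * fps_X" using assms(2) by (intro LT_endo_teichmueller) simp
  then have "red_fps red (LT_endo p f a) = fps_const (red a) * fps_X"
    by (intro fps_ext) (simp add: red_fps_def red_zero)
  moreover have "red a \<noteq> 0"
  proof
    assume "red a = 0"
    moreover have "red a ^ (q - 1) = 1" using red_power[OF assms(1), of "q - 1"] assms(2) red_one by simp
    ultimately show False using q_gt_1 by (simp add: power_0_left)
  qed
  ultimately show ?thesis unfolding f_LT_def by simp
qed

lemma tail_const_reduction:
  assumes "a \<in> OK" "red a \<noteq> 0"
  shows "tail_const a \<in> OK"
    and "red (tail_const a) = red a * red ((1 - a ^ (q - 1)) / of_nat p)"
proof -
  have eq: "tail_const a = a * ((1 - a ^ (q - 1)) / of_nat p)"
    by (subst (1 2) q_Suc) (simp add: algebra_simps)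
  show "tail_const a \<in> OK"
    unfolding eq using assms by (intro OK_mult fermat_quotient_mem)
  show "red (tail_const a) = red a * red ((1 - a ^ (q - 1)) / of_nat p)"
    unfolding eq using assms by (intro red_mult fermat_quotient_mem)
qed

lemma inverse_f_LT_expansion:
  assumes a: "a \<in> OK" "a \<noteq> 0" "inverse a \<in> OK"
  defines "c \<equiv> red ((1 - a ^ (q - 1)) / of_nat p)"
  shows "\<exists>h. fps_supp_cong (q - 1) 0 h \<and>
    inverse (f_LT p f red a) = 1 + fps_const c * fps_X ^ (q - 1)
      - fps_const (c ^ s) * fps_X ^ ((q - 1) * (s + 1)) + fps_X ^ ((q - 1) * (2 * s + 1)) * h"
proof -
  define b where "b = red a"
  define d where "d = (q - 1) * s"
  have "b * red (inverse a) = 1" using red_mult[OF a(1) a(3)] a(2) red_one by (simp add: b_def)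
  then have b0: "b \<noteq> 0" by auto
  note tail_const_red = tail_const_reduction[OF a(1) b0[unfolded b_def]]
  obtain R where R_supp: "fps_supp_cong (q - 1) 0 R" and
    R: "red_fps red (LT_tail a) = fps_const (b * c) - fps_const (b ^ (q - s) * (b * c) ^ s) * fps_X ^ d +
      fps_X ^ (2 * d) * R"
    using residue_LT_tail_expansion[OF a(1) tail_const_red(1)] unfolding tail_const_red(2) b_def c_def d_def by blast
  have "b ^ (q - s) * (b * c) ^ s = b ^ (q - s + s) * c ^ s"
    by (simp add: power_mult_distrib power_add mult_ac)
  also have "q - s + s = q" using three_s_le_q by simp
  finally have bc: "b ^ (q - s) * (b * c) ^ s = b * c ^ s" by (simp add: residue_power_q)
  define h where "h = fps_const (inverse b) * R"
  define V where "V = fps_const c - fps_const (c ^ s) * fps_X ^ d + fps_X ^ (2 * d) * h"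
  define U where "U = 1 + fps_X ^ (q - 1) * V"
  have "fps_const b * h = R" using b0 by (simp add: h_def mult.assoc[symmetric])
  then have "fps_const b * V =
      fps_const (b * c) - fps_const (b * c ^ s) * fps_X ^ d + fps_X ^ (2 * d) * R"
    unfolding V_def by (simp add: ring_distribs mult.left_commute[of "fps_const b"] mult.commute)
  then have tail_eq: "red_fps red (LT_tail a) = fps_const b * V" by (simp only: R bc)
  have "red_fps red (LT_endo p f a) = red_fps red (fps_const a * fps_X + fps_X ^ q * LT_tail a)"
    by (rule arg_cong[where f = "red_fps red", OF LT_endo_eq])
  also have "\<dots> = fps_const b * fps_X + fps_X ^ q * (fps_const b * V)"
    using red_fps_linear_plus_X_power_mult[OF q_gt_1, of a "LT_tail a"] unfolding tail_eq b_def .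
  also have "\<dots> = fps_const b * fps_X * U"
    by (subst q_Suc) (simp add: U_def algebra_simps)
  finally have G_eq: "red_fps red (LT_endo p f a) = fps_const b * fps_X * U" .
  have "f_LT p f red a = inverse U"
    unfolding f_LT_def b_def[symmetric] G_eq
    using b0 q_gt_1 by (intro fps_divide_mult_self) (simp_all add: U_def)
  then have "inverse (f_LT p f red a) = U" using q_gt_1 by (simp add: U_def)
  moreover have "(q - 1) * (s + 1) = (q - 1) + d" "(q - 1) * (2 * s + 1) = (q - 1) + 2 * d"
    by (simp_all add: d_def algebra_simps)
  moreover have "fps_supp_cong (q - 1) 0 h"
    using R_supp by (simp add: h_def fps_supp_cong_def)
  ultimately show ?thesis
    unfolding U_def V_def by (intro exI[of _ h]) (simp add: power_add algebra_simps)
qed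

end

theorem lemma2p1:
  fixes p f :: nat and OK :: "'k::field_char_0 set" and red :: "'k \<Rightarrow> 'r::{field,finite}"
  assumes "prime p" and "odd p" and "f \<ge> 1"
    and "unramified_setup p f OK red"
  shows "(\<forall>a. a \<in> OK \<and> a ^ (p ^ f - 1) = 1 \<longrightarrow> f_LT p f red a = 1) \<and>
         (\<forall>a. a \<in> OK \<and> a \<noteq> 0 \<and> inverse a \<in> OK \<longrightarrow>
            (let q = p ^ f; c = red ((1 - a ^ (q - 1)) / of_nat p) in
             \<exists>h :: 'r fps. (\<forall>n. \<not> (q - 1) dvd n \<longrightarrow> fps_nth h n = 0) \<and>
               inverse (f_LT p f red a) =
                 1 + fps_const c * fps_X ^ (q - 1)
                   - fps_const (c ^ (p ^ (f - 1))) * fps_X ^ ((q - 1) * (p ^ (f - 1) + 1))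
                   + fps_X ^ ((q - 1) * (2 * p ^ (f - 1) + 1)) * h))"
proof -
  interpret unramified_lubin_tate p f OK red
    using assms by unfold_locales (auto simp: unramified_setup_def)
  show ?thesis
    using f_LT_teichmueller inverse_f_LT_expansion
    unfolding Let_def fps_supp_cong_def cong_0_iff by blast
qed

end
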